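(* Let $k,n$ be integers with $2\le k\le n$. Then $d^E_2(n,k)\le \max\{d^E_2(n-1,k-1),\,d^E_2(n-2,k-2)\}$.
   Context: For $k\le n$, $d^E_2(n,k)$ denotes the largest minimum distance among all binary Euclidean LCD $[n,k]$ codes, i.e. $k$-dimensional subspaces $C\subseteq\mathbb{F}_2^n$ with $C\cap C^{\perp_E}=\{0\}$, where $C^{\perp_E}$ is the dual with respect to $\langle x,y\rangle_E=\sum x_iy_i$. *)

theory Defs
  imports Main "HOL-Library.Z2" "HOL-Library.Function_Algebras" "HOL-Library.Extended_Nat"
begin

text \<open>Vectors of F_2^n are modelled as functions nat => bit vanishing outside {0..<n}.\<close>

definition vecs :: "nat \<Rightarrow> (nat \<Rightarrow> bit) set" where
  "vecs n = {x. \<forall>i. n \<le> i \<longrightarrow> x i = 0}"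

definition bscale :: "bit \<Rightarrow> (nat \<Rightarrow> bit) \<Rightarrow> (nat \<Rightarrow> bit)" where
  "bscale c x = (\<lambda>i. c * x i)"

definition einner :: "nat \<Rightarrow> (nat \<Rightarrow> bit) \<Rightarrow> (nat \<Rightarrow> bit) \<Rightarrow> bit" where
  "einner n x y = (\<Sum>i<n. x i * y i)"

definition edual :: "nat \<Rightarrow> (nat \<Rightarrow> bit) set \<Rightarrow> (nat \<Rightarrow> bit) set" where
  "edual n C = {y \<in> vecs n. \<forall>x\<in>C. einner n x y = 0}"

definition binary_linear_code :: "nat \<Rightarrow> nat \<Rightarrow> (nat \<Rightarrow> bit) set \<Rightarrow> bool" where
  "binary_linear_code n k C \<longleftrightarrow> C \<subseteq> vecs n \<and> module.subspace bscale C
      \<and> vector_space.dim bscale C = k"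

definition LCD_code :: "nat \<Rightarrow> nat \<Rightarrow> (nat \<Rightarrow> bit) set \<Rightarrow> bool" where
  "LCD_code n k C \<longleftrightarrow> binary_linear_code n k C \<and> C \<inter> edual n C = {0}"

definition hdist :: "nat \<Rightarrow> (nat \<Rightarrow> bit) \<Rightarrow> (nat \<Rightarrow> bit) \<Rightarrow> nat" where
  "hdist n x y = card {i. i < n \<and> x i \<noteq> y i}"

text \<open>Minimum distance; the zero code gets minimum distance infinity (Inf of the empty set).\<close>
definition min_dist :: "nat \<Rightarrow> (nat \<Rightarrow> bit) set \<Rightarrow> enat" where
  "min_dist n C = (INF p \<in> {(x, y). x \<in> C \<and> y \<in> C \<and> x \<noteq> y}. enat (hdist n (fst p) (snd p)))"

definition dE2 :: "nat \<Rightarrow> nat \<Rightarrow> enat" where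
  "dE2 n k = (SUP C \<in> {C. LCD_code n k C}. min_dist n C)"

end

theory Submission
  imports Defs "HOL-Combinatorics.Permutations"
begin

(* Let C be an LCD [n,k] code and i a coordinate on which C is not identically zero. The
   shortened code {c \<in> C. c_i = 0} has dimension k - 1; if it is again LCD, deleting the
   coordinate i (on which it now vanishes) gives an LCD [n-1,k-1] code whose minimum distance
   is at least that of C. Otherwise a nonzero u in the radical of the shortened code satisfies
   <u,c> = c_i for all c \<in> C, and u_j = 1 for some j. If shortening at j is not LCD either,
   we get v \<in> C with <v,c> = c_j; then c \<mapsto> c + c_j u + c_i v projects C onto the code
   shortened at both i and j without changing inner products with that code, so the doubly
   shortened code is LCD of dimension k - 2, and deleting i and j gives an LCD [n-2,k-2] code. *)

lemma bit_add_self [simp]: "(b::bit) + b = 0"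
  by (cases b) simp_all

lemma bit_add_eq_0_iff: "(a::bit) + b = 0 \<longleftrightarrow> a = b"
  by (cases a; cases b) simp_all

lemma fun_bit_add_self [simp]: "(x::nat \<Rightarrow> bit) + x = 0"
  by (simp add: fun_eq_iff)

interpretation V: vector_space bscale
  by unfold_locales (auto simp: bscale_def fun_eq_iff algebra_simps)

lemma bscale_eq_0_or_self: "bscale c x = 0 \<or> bscale c x = x"
  by (cases c) simp_all

lemma subspace_iff_add_closed: "V.subspace S \<longleftrightarrow> 0 \<in> S \<and> (\<forall>x\<in>S. \<forall>y\<in>S. x + y \<in> S)"
  unfolding V.subspace_def by (metis bscale_eq_0_or_self)

lemma finite_vecs: "finite (vecs n)"
proof -
  have "(UNIV :: bit set) = {0, 1}"
    using bit.exhaust by auto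
  then have "finite (UNIV :: bit set)"
    by (metis finite.emptyI finite_insert)
  then have "finite {f. \<forall>i. (i \<in> {..<n} \<longrightarrow> f i \<in> (UNIV :: bit set)) \<and> (i \<notin> {..<n} \<longrightarrow> f i = 0)}"
    by (intro finite_set_of_finite_funs) simp_all
  then show ?thesis
    by (rule finite_subset[rotated]) (auto simp: vecs_def)
qed

lemma vecs_support_less: "x \<in> vecs n \<Longrightarrow> x j \<noteq> 0 \<Longrightarrow> j < n"
  unfolding vecs_def using not_le by blast

lemma einner_commute: "einner n x y = einner n y x"
  unfolding einner_def by (simp only: mult.commute)

lemma einner_add_right: "einner n x (y + z) = einner n x y + einner n x z"
  unfolding einner_def plus_fun_def by (simp only: distrib_left sum.distrib)

lemma einner_scale_right: "einner n x (bscale c y) = c * einner n x y"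
  unfolding einner_def bscale_def by (simp only: sum_distrib_left mult.left_commute)

lemma einner_zero_left [simp]: "einner n 0 y = 0"
  by (simp add: einner_def)

definition nondegenerate :: "nat \<Rightarrow> (nat \<Rightarrow> bit) set \<Rightarrow> bool" where
  "nondegenerate n S \<longleftrightarrow> (\<forall>x\<in>S. x \<noteq> 0 \<longrightarrow> (\<exists>y\<in>S. einner n x y = 1))"

lemma LCD_code_iff_nondegenerate:
  "LCD_code n k C \<longleftrightarrow> C \<subseteq> vecs n \<and> V.subspace C \<and> V.dim C = k \<and> nondegenerate n C"
proof -
  have "C \<inter> edual n C = {0} \<longleftrightarrow> nondegenerate n C" if "C \<subseteq> vecs n" "0 \<in> C"
  proof -
    have "C \<inter> edual n C = {x \<in> C. \<forall>y\<in>C. einner n x y \<noteq> 1}"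
      using that(1) by (auto simp: edual_def einner_commute)
    then show ?thesis
      using that(2) by (auto simp: nondegenerate_def)
  qed
  then show ?thesis
    unfolding LCD_code_def binary_linear_code_def by (auto simp: V.subspace_0)
qed

lemma basis_exists_span_eq:
  obtains B where "B \<subseteq> S" "V.independent B" "V.span B = V.span S" "card B = V.dim S"
proof -
  obtain B where B: "B \<subseteq> S" "V.independent B" "S \<subseteq> V.span B" "card B = V.dim S"
    using V.basis_exists by blast
  moreover have "V.span B = V.span S"
    using B(1,3) V.span_superset by (intro V.span_eq[THEN iffD2]) blast
  ultimately show thesis
    using that by blast
qed

lemma dim_insert_finite:
  assumes "finite S" and "x \<notin> V.span S"
  shows "V.dim (insert x S) = Suc (V.dim S)"
proof -
  obtain B where B: "B \<subseteq> S" "V.independent B" and span_B: "V.span B = V.span S"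
    and card_B: "card B = V.dim S"
    by (rule basis_exists_span_eq)
  from assms(2) span_B have x: "x \<notin> V.span B"
    by simp
  have "V.span (insert x B) = V.span (insert x S)"
    unfolding V.span_insert span_B ..
  then have "V.dim (insert x S) = card (insert x B)"
    using V.dim_eq_card[OF _ V.independent_insertI[OF x B(2)]] by simp
  also have "\<dots> = Suc (card B)"
    using finite_subset[OF B(1) assms(1)] x V.span_base[of x B] by (subst card_insert_disjoint) auto
  finally show ?thesis
    using card_B by simp
qed

definition shorten :: "(nat \<Rightarrow> bit) set \<Rightarrow> nat set \<Rightarrow> (nat \<Rightarrow> bit) set" where
  "shorten C J = {c \<in> C. \<forall>j\<in>J. c j = 0}"

lemma shorten_subset: "shorten C J \<subseteq> C"
  by (auto simp: shorten_def)

lemma shorten_shorten: "shorten (shorten C I) J = shorten C (I \<union> J)"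
  by (auto simp: shorten_def)

lemma subspace_shorten: "V.subspace C \<Longrightarrow> V.subspace (shorten C J)"
  by (auto simp: shorten_def subspace_iff_add_closed)

lemma dim_shorten_coordinate:
  assumes C: "V.subspace C" "finite C" and c: "c \<in> C" "c j = 1"
  shows "V.dim C = Suc (V.dim (shorten C {j}))"
proof -
  let ?D = "shorten C {j}"
  have "x \<in> V.span (insert c ?D)" if "x \<in> C" for x
  proof -
    have "x + bscale (x j) c \<in> C"
      using that c C by (simp add: V.subspace_add V.subspace_scale)
    moreover have "(x + bscale (x j) c) j = 0"
      using c by (simp add: bscale_def)
    ultimately have "x + bscale (x j) c \<in> ?D"
      by (simp add: shorten_def)
    then have "(x + bscale (x j) c) + bscale (x j) c \<in> V.span (insert c ?D)"
      by (intro V.span_add V.span_scale V.span_base) auto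
    then show ?thesis
      by (simp add: add.assoc)
  qed
  then have "V.span (insert c ?D) = C"
    using C c shorten_subset by (intro subset_antisym V.span_minimal) auto
  then have "V.dim C = V.dim (insert c ?D)"
    by (metis V.dim_span)
  also have "\<dots> = Suc (V.dim ?D)"
  proof (rule dim_insert_finite)
    show "finite ?D"
      using finite_subset[OF shorten_subset C(2)] .
    have span_D: "V.span ?D = ?D"
      using subspace_shorten[OF C(1)] by (rule V.span_eq_iff[THEN iffD2])
    show "c \<notin> V.span ?D"
      unfolding span_D using c(2) by (simp add: shorten_def)
  qed
  finally show ?thesis .
qed

lemma coordinate_vector_if_shorten_degenerate:
  assumes C: "V.subspace C" and nd: "nondegenerate n C"
    and dg: "\<not> nondegenerate n (shorten C {j})"
  obtains u where "u \<in> C" "u j = 0" "\<And>c. c \<in> C \<Longrightarrow> einner n u c = c j"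
proof -
  obtain x where x: "x \<in> C" "x j = 0" "x \<noteq> 0"
    and orth: "\<And>y. y \<in> C \<Longrightarrow> y j = 0 \<Longrightarrow> einner n x y = 0"
    using dg by (force simp: nondegenerate_def shorten_def)
  obtain y where y: "y \<in> C" "einner n x y = 1"
    using nd x(1,3) by (auto simp: nondegenerate_def)
  have "y j = 1"
    using orth[OF y(1)] y(2) by (metis bit_not_one_iff zero_neq_one)
  have "einner n x c = c j" if "c \<in> C" for c
  proof -
    have "c + bscale (c j) y \<in> C"
      using C that y(1) by (simp add: V.subspace_add V.subspace_scale)
    moreover have "(c + bscale (c j) y) j = 0"
      using \<open>y j = 1\<close> by (simp add: bscale_def)
    ultimately have "einner n x (c + bscale (c j) y) = 0"
      by (rule orth)
    then show ?thesis
      by (simp only: einner_add_right einner_scale_right y(2) mult_1_right bit_add_eq_0_iff)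
  qed
  with x(1,2) that show thesis
    by blast
qed

lemma nondegenerate_shorten_pair:
  assumes C: "V.subspace C" and nd: "nondegenerate n C"
    and u: "u \<in> C" "u i = 0" "u j = 1" "\<And>c. c \<in> C \<Longrightarrow> einner n u c = c i"
    and v: "v \<in> C" "v i = 1" "v j = 0" "\<And>c. c \<in> C \<Longrightarrow> einner n v c = c j"
  shows "nondegenerate n (shorten C {i, j})"
  unfolding nondegenerate_def
proof (intro ballI impI)
  fix x assume x: "x \<in> shorten C {i, j}" "x \<noteq> 0"
  then obtain y where y: "y \<in> C" "einner n x y = 1"
    using nd by (auto simp: nondegenerate_def shorten_def)
  define y' where "y' = y + bscale (y j) u + bscale (y i) v"
  have "y' \<in> C"
    unfolding y'_def using C y(1) u(1) v(1) by (simp add: V.subspace_add V.subspace_scale)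
  moreover have "y' i = 0" "y' j = 0"
    unfolding y'_def using u(2,3) v(2,3) by (simp_all add: bscale_def)
  moreover have "einner n x y' = 1"
  proof -
    have "einner n x u = 0" "einner n x v = 0"
      using x(1) u(4)[of x] v(4)[of x] by (simp_all add: einner_commute[of n x] shorten_def)
    then show ?thesis
      using y(2) by (simp add: y'_def einner_add_right einner_scale_right)
  qed
  ultimately show "\<exists>y\<in>shorten C {i, j}. einner n x y = 1"
    by (auto simp: shorten_def)
qed

lemma dim_shorten_pair:
  assumes C: "V.subspace C" "finite C"
    and u: "u \<in> C" "u j = 1" and v: "v \<in> C" "v i = 1" "v j = 0"
  shows "V.dim C = V.dim (shorten C {i, j}) + 2"
proof -
  have "v \<in> shorten C {j}"
    using v(1,3) by (simp add: shorten_def)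
  then have "V.dim (shorten C {j}) = Suc (V.dim (shorten (shorten C {j}) {i}))"
    using dim_shorten_coordinate[OF subspace_shorten[OF C(1)] finite_subset[OF shorten_subset C(2)]]
      v(2) by blast
  also have "shorten (shorten C {j}) {i} = shorten C {i, j}"
    by (simp add: shorten_shorten insert_commute)
  finally show ?thesis
    using dim_shorten_coordinate[OF C u] by simp
qed

lemma LCD_code_shorten:
  assumes "LCD_code n k C"
    and "V.dim C = V.dim (shorten C J) + card J" and "nondegenerate n (shorten C J)"
  shows "LCD_code n (k - card J) (shorten C J)"
  using assms shorten_subset[of C J] subspace_shorten[of C J]
  by (auto simp: LCD_code_iff_nondegenerate)

lemma LCD_code_shorten_one_or_two:
  assumes C: "LCD_code n k C" and "k \<noteq> 0"
  obtains J where "J \<subseteq> {..<n}" "card J \<in> {1, 2}" "LCD_code n (k - card J) (shorten C J)"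
proof -
  note result = that
  have Cv: "C \<subseteq> vecs n" and sub: "V.subspace C" and dim: "V.dim C = k" and nd: "nondegenerate n C"
    using C unfolding LCD_code_iff_nondegenerate by blast+
  have fin: "finite C"
    using finite_subset[OF Cv finite_vecs] .
  have coord: "j < n" if "c \<in> C" "c j = 1" for c j
    using vecs_support_less[of c n j] that Cv by auto
  have single: thesis if "c \<in> C" "c j = 1" "nondegenerate n (shorten C {j})" for c j
  proof (rule result[of "{j}"])
    show "LCD_code n (k - card {j}) (shorten C {j})"
      using dim_shorten_coordinate[OF sub fin that(1,2)] that(3)
      by (intro LCD_code_shorten[OF C]) simp_all
  qed (simp_all add: coord[OF that(1,2)])
  have "\<not> C \<subseteq> {0}"
    using assms(2) dim V.dim_le_card[of C "{}"] by auto
  then obtain c where "c \<in> C" "c \<noteq> 0"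
    by blast
  then obtain i where c: "c \<in> C" "c i = 1"
    by (auto simp: fun_eq_iff)
  show thesis
  proof (cases "nondegenerate n (shorten C {i})")
    case True
    with c single show thesis by blast
  next
    case False
    then obtain u where u: "u \<in> C" "u i = 0" "\<And>c. c \<in> C \<Longrightarrow> einner n u c = c i"
      using coordinate_vector_if_shorten_degenerate[OF sub nd] by blast
    have "u \<noteq> 0"
      using u(3)[OF c(1)] c(2) by auto
    then obtain j where j: "u j = 1"
      by (auto simp: fun_eq_iff)
    show thesis
    proof (cases "nondegenerate n (shorten C {j})")
      case True
      with u(1) j single show thesis by blast
    next
      case False
      then obtain v where v: "v \<in> C" "v j = 0" "\<And>c. c \<in> C \<Longrightarrow> einner n v c = c j"
        using coordinate_vector_if_shorten_degenerate[OF sub nd] by blast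
      have "v i = 1"
        using u(3)[OF v(1)] v(3)[OF u(1)] j by (simp add: einner_commute)
      have "i \<noteq> j"
        using u(2) j by auto
      have "LCD_code n (k - card {i, j}) (shorten C {i, j})"
        using \<open>i \<noteq> j\<close> dim_shorten_pair[OF sub fin u(1) j v(1) \<open>v i = 1\<close> v(2)]
          nondegenerate_shorten_pair[OF sub nd u(1,2) j u(3) v(1) \<open>v i = 1\<close> v(2,3)]
        by (intro LCD_code_shorten[OF C]) simp_all
      then show thesis
        using result[of "{i, j}"] \<open>i \<noteq> j\<close> coord[OF c] coord[OF u(1) j] by simp
    qed
  qed
qed

lemma dim_image_inj:
  assumes "Vector_Spaces.linear bscale bscale f" and "inj f"
  shows "V.dim (f ` S) = V.dim S"
proof -
  interpret f: Vector_Spaces.linear bscale bscale f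
    by fact
  obtain B where B: "B \<subseteq> S" "V.independent B" "V.span B = V.span S" "card B = V.dim S"
    by (rule basis_exists_span_eq)
  then have "V.span (f ` B) = V.span (f ` S)"
    by (simp add: f.span_image)
  moreover have "V.independent (f ` B)"
    using f.independent_injective_image[OF B(2)] inj_on_subset[OF assms(2)] by blast
  ultimately have "V.dim (f ` S) = card (f ` B)"
    by (metis V.dim_span V.dim_span_eq_card_independent)
  also have "\<dots> = card B"
    using card_image inj_on_subset[OF assms(2)] by blast
  finally show ?thesis
    using B(4) by simp
qed

lemma linear_comp_right: "Vector_Spaces.linear bscale bscale (\<lambda>x. x \<circ> p)"
  by (simp add: Vector_Spaces.linear_iff V.vector_space_axioms bscale_def fun_eq_iff)

lemma comp_permutes_eq_iff: "p permutes S \<Longrightarrow> x \<circ> p = y \<circ> p \<longleftrightarrow> x = y"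
  by (metis comp_assoc comp_id permutes_inv_o(1))

lemma inj_comp_permutes: "p permutes S \<Longrightarrow> inj (\<lambda>x. x \<circ> p)"
  by (rule injI) (simp add: comp_permutes_eq_iff)

lemma vecs_comp_permutes: "p permutes {..<n} \<Longrightarrow> x \<in> vecs n \<Longrightarrow> x \<circ> p \<in> vecs n"
  by (simp add: vecs_def permutes_not_in)

lemma einner_comp_permutes:
  assumes "p permutes {..<n}"
  shows "einner n (x \<circ> p) (y \<circ> p) = einner n x y"
  unfolding einner_def comp_def
  using sum.reindex_bij_betw[OF permutes_imp_bij[OF assms], of "\<lambda>i. x i * y i"] .

lemma hdist_comp_permutes:
  assumes "p permutes {..<n}"
  shows "hdist n (x \<circ> p) (y \<circ> p) = hdist n x y"
proof -
  let ?A = "{i. i < n \<and> x i \<noteq> y i}"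
  have "{i. i < n \<and> (x \<circ> p) i \<noteq> (y \<circ> p) i} = p -` ?A"
    using permutes_in_image[OF assms] by auto
  also have "card (p -` ?A) = card ?A"
    using permutes_inj[OF assms] permutes_surj[OF assms] by (intro card_vimage_inj) auto
  finally show ?thesis
    unfolding hdist_def .
qed

lemma LCD_code_comp_permutes:
  assumes C: "LCD_code n k C" and p: "p permutes {..<n}"
  shows "LCD_code n k ((\<lambda>x. x \<circ> p) ` C)"
proof -
  let ?f = "\<lambda>x::nat \<Rightarrow> bit. x \<circ> p"
  have Cv: "C \<subseteq> vecs n" and sub: "V.subspace C" and dim: "V.dim C = k" and nd: "nondegenerate n C"
    using C unfolding LCD_code_iff_nondegenerate by blast+
  interpret f: Vector_Spaces.linear bscale bscale ?f
    by (rule linear_comp_right)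
  have "?f ` C \<subseteq> vecs n"
    using Cv vecs_comp_permutes[OF p] by blast
  moreover have "V.subspace (?f ` C)"
    using f.subspace_image[OF sub] .
  moreover have "V.dim (?f ` C) = k"
    using dim_image_inj[OF linear_comp_right inj_comp_permutes[OF p]] dim by simp
  moreover have "nondegenerate n (?f ` C)"
    using nd einner_comp_permutes[OF p] by (fastforce simp: nondegenerate_def)
  ultimately show ?thesis
    by (simp add: LCD_code_iff_nondegenerate)
qed

lemma min_dist_comp_permutes:
  assumes p: "p permutes {..<n}"
  shows "min_dist n ((\<lambda>x. x \<circ> p) ` C) = min_dist n C"
proof -
  let ?f = "\<lambda>x::nat \<Rightarrow> bit. x \<circ> p"
  have pairs: "{(x, y). x \<in> ?f ` C \<and> y \<in> ?f ` C \<and> x \<noteq> y}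
      = map_prod ?f ?f ` {(x, y). x \<in> C \<and> y \<in> C \<and> x \<noteq> y}"
    using comp_permutes_eq_iff[OF p] by auto
  show ?thesis
    unfolding min_dist_def pairs image_image by (simp add: hdist_comp_permutes[OF p])
qed

lemma einner_eq_if_vecs: "x \<in> vecs m \<Longrightarrow> m \<le> n \<Longrightarrow> einner n x y = einner m x y"
  unfolding einner_def by (rule sum.mono_neutral_cong_right) (auto simp: vecs_def)

lemma hdist_eq_if_vecs:
  assumes "x \<in> vecs m" "y \<in> vecs m" "m \<le> n"
  shows "hdist n x y = hdist m x y"
proof -
  have "{i. i < n \<and> x i \<noteq> y i} = {i. i < m \<and> x i \<noteq> y i}"
    using assms unfolding vecs_def by (auto simp: not_le[symmetric])
  then show ?thesis
    unfolding hdist_def by simp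
qed

lemma LCD_code_truncate:
  assumes "LCD_code n k C" "C \<subseteq> vecs m" "m \<le> n"
  shows "LCD_code m k C"
proof -
  have "einner n x y = einner m x y" if "x \<in> C" for x y
    using that assms(2,3) einner_eq_if_vecs by blast
  then show ?thesis
    using assms(1,2) by (simp add: LCD_code_iff_nondegenerate nondegenerate_def)
qed

lemma min_dist_truncate: "C \<subseteq> vecs m \<Longrightarrow> m \<le> n \<Longrightarrow> min_dist m C = min_dist n C"
  unfolding min_dist_def
  by (rule INF_cong) (auto simp: hdist_eq_if_vecs[where m = m and n = n] subsetD)

lemma LCD_code_delete_zero_coordinate:
  assumes C: "LCD_code (Suc m) k C" and j: "j < Suc m" "\<forall>c\<in>C. c j = 0"
  shows "LCD_code m k ((\<lambda>x. x \<circ> transpose j m) ` C)"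
    and "min_dist m ((\<lambda>x. x \<circ> transpose j m) ` C) = min_dist (Suc m) C"
proof -
  let ?p = "transpose j m"
  have p: "?p permutes {..<Suc m}"
    using j(1) by (intro permutes_swap_id) auto
  have "c \<circ> ?p \<in> vecs m" if "c \<in> C" for c
  proof -
    have "c i = 0" if "Suc m \<le> i" for i
      using \<open>c \<in> C\<close> C that by (auto simp: LCD_code_iff_nondegenerate vecs_def)
    then show ?thesis
      using that j by (auto simp: vecs_def transpose_def le_Suc_eq)
  qed
  then have vecs_m: "(\<lambda>x. x \<circ> ?p) ` C \<subseteq> vecs m"
    by blast
  show "LCD_code m k ((\<lambda>x. x \<circ> ?p) ` C)"
    using LCD_code_truncate[OF LCD_code_comp_permutes[OF C p] vecs_m] by simp
  show "min_dist m ((\<lambda>x. x \<circ> ?p) ` C) = min_dist (Suc m) C"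
    using min_dist_truncate[OF vecs_m, of "Suc m"] min_dist_comp_permutes[OF p] by simp
qed

lemma LCD_code_puncture:
  assumes "LCD_code n k C" and "J \<subseteq> {..<n}" and "\<forall>c\<in>C. \<forall>j\<in>J. c j = 0"
  shows "\<exists>C'. LCD_code (n - card J) k C' \<and> min_dist (n - card J) C' = min_dist n C"
  using assms
proof (induction "card J" arbitrary: n C J)
  case 0
  then have "J = {}"
    using finite_subset[OF "0.prems"(2) finite_lessThan] by simp
  with "0.prems"(1) show ?case
    by auto
next
  case (Suc r)
  then obtain j where j: "j \<in> J"
    by (metis card.empty ex_in_conv nat.distinct(1))
  then have "j < n"
    using Suc.prems(2) by blast
  then obtain m where n: "n = Suc m"
    by (cases n) auto
  let ?p = "transpose j m"
  let ?C1 = "(\<lambda>x. x \<circ> ?p) ` C"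
  let ?J1 = "?p ` (J - {j})"
  have C1: "LCD_code m k ?C1" "min_dist m ?C1 = min_dist n C"
    using LCD_code_delete_zero_coordinate[of m k C j] Suc.prems(1,3) \<open>j < n\<close> j n by auto
  have "?J1 \<subseteq> {..<m}"
    using Suc.prems(2) \<open>j < n\<close> n by (auto simp: transpose_def)
  moreover have "card ?J1 = r"
    using Suc.hyps(2) j by (simp add: card_image inj_on_subset)
  moreover have "\<forall>c\<in>?C1. \<forall>i\<in>?J1. c i = 0"
    using Suc.prems(3) by auto
  ultimately obtain C' where "LCD_code (m - r) k C'" "min_dist (m - r) C' = min_dist m ?C1"
    using Suc.hyps(1)[OF _ C1(1)] by metis
  moreover have "n - card J = m - r"
    using Suc.hyps(2) n by simp
  ultimately show ?case
    using C1(2) by auto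
qed

lemma min_dist_antimono: "D \<subseteq> C \<Longrightarrow> min_dist n C \<le> min_dist n D"
  unfolding min_dist_def by (rule INF_superset_mono) auto

lemma min_dist_le_dE2: "LCD_code n k C \<Longrightarrow> min_dist n C \<le> dE2 n k"
  unfolding dE2_def by (rule SUP_upper) simp

theorem corollary4p4:
  fixes n k :: nat
  assumes "2 \<le> k" and "k \<le> n"
  shows "dE2 n k \<le> max (dE2 (n - 1) (k - 1)) (dE2 (n - 2) (k - 2))"
  unfolding dE2_def[of n k]
proof (rule SUP_least)
  fix C assume "C \<in> {C. LCD_code n k C}"
  moreover have "k \<noteq> 0"
    using assms(1) by simp
  ultimately obtain J where J: "J \<subseteq> {..<n}" "card J \<in> {1, 2}" "LCD_code n (k - card J) (shorten C J)"
    using LCD_code_shorten_one_or_two by blast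
  have "\<forall>c\<in>shorten C J. \<forall>j\<in>J. c j = 0"
    by (simp add: shorten_def)
  then obtain C' where "LCD_code (n - card J) (k - card J) C'"
      and C': "min_dist (n - card J) C' = min_dist n (shorten C J)"
    using LCD_code_puncture[OF J(3) J(1)] by blast
  have "min_dist n C \<le> min_dist n (shorten C J)"
    by (rule min_dist_antimono[OF shorten_subset])
  also have "\<dots> \<le> dE2 (n - card J) (k - card J)"
    unfolding C'[symmetric] by (rule min_dist_le_dE2) fact
  also have "\<dots> \<le> max (dE2 (n - 1) (k - 1)) (dE2 (n - 2) (k - 2))"
    using J(2) by auto
  finally show "min_dist n C \<le> max (dE2 (n - 1) (k - 1)) (dE2 (n - 2) (k - 2))" .
qed

end
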